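(* Let $m\ge 1$. Any product two-action game with $m$ players whose characteristic tuple is $(\underline v,\sigma^1,\dots,\sigma^m)=((0,\dots,0),\delta^1,\dots,\delta^m)$ is maximal; that is, for every $\pi\in S_m\setminus\mathrm{Der}_m$, exactly half of the elements of $EC(\pi)$ are Nash equilibria. (Such games exist for every $m$: choose $v_i=0$ and numbers $a^i_j\in(0,1)$ ordered according to $\delta^j$, and e.g. $U^i(s^i_0,\cdot)=0$, with $V^i$ the multilinear map $\gamma^i\prod_{j\neq i}(\gamma^j-a^i_j)$.)
   Context: Fix an integer $m\ge 1$ and $\mathcal A=\{1,\dots,m\}$. A two-action game is a finite game in normal form with player set $\mathcal A$ in which each player $i$ has exactly two pure strategies $s^i_0,s^i_1$, together with utility functions $U^i:S\to\mathbb R$, where $S=\prod_{i\in\mathcal A}\{s^i_0,s^i_1\}$. A mixed strategy combination is identified with $\underline\gamma=(\gamma^1,\dots,\gamma^m)\in[0,1]^m$, where $\gamma^i$ is the probability with which player $i$ plays $s^i_1$. The expected utility $V^i$ is the multilinear extension $V^i(\underline\gamma)=\sum_{(j_1,\dots,j_m)\in\{0,1\}^m}\prod_{k=1}^m p_k(j_k)\,U^i(s^1_{j_1},\dots,s^m_{j_m})$ with $p_k(1)=\gamma^k$, $p_k(0)=1-\gamma^k$. Write $\underline\gamma^{-i}=(\gamma^j)_{j\ne i}$ and $\lambda^i(\underline\gamma^{-i}):=V^i(\underline\gamma)|_{\gamma^i=1}-V^i(\underline\gamma)|_{\gamma^i=0}$. A Nash equilibrium is a point $\underline\gamma\in[0,1]^m$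 such that for every $i$: $\lambda^i(\underline\gamma^{-i})=0$ if $0<\gamma^i<1$; $\lambda^i(\underline\gamma^{-i})\le 0$ if $\gamma^i=0$; $\lambda^i(\underline\gamma^{-i})\ge 0$ if $\gamma^i=1$. For $\underline\gamma$ put $L(\underline\gamma)=\{i:\gamma^i\in\{0,1\}\}$. A two-action game is a product two-action game if there exist $\underline v=(v_1,\dots,v_m)\in\{0,1\}^m$ and numbers $a^i_j\in(0,1)$ for $i,j\in\mathcal A$, $i\ne j$, with $a^{i_1}_j\neq a^{i_2}_j$ whenever $i_1\neq i_2$ and both differ from $j$, such that $\lambda^i(\underline\gamma^{-i})=(-1)^{v_i}\prod_{j\in\mathcal A\setminus\{i\}}(\gamma^j-a^i_j)$ for every $i\in\mathcal A$. For $j\in\mathcal A$ the $j$-th associated permutation $\sigma^j\in S_m$ is the unique permutation with $\sigma^j(j)=j$ such that for $i,i'\in\mathcal A\setminus\{j\}$ one has $\sigma^j(i)<\sigma^j(i')$ iff $a^i_j>a^{i'}_j$. The tuple $(\underline v,\sigma^1,\dots,\sigma^m)$ is the characteristic tuple. For $\pi\in S_m$, $F(\pi)=\{i:\pi(i)=i\}$; $\mathrm{Der}_m=\{\pi\in S_m: F(\pi)=\emptyset\}$; $EC(\pi):=\{\underline\gamma\in[0,1]^m \mid L(\underline\gamma)=F(\pi),\ \gamma^j=a^{\pi(j)}_j \text{ for all } j\notin F(\pi)\}$. A product two-action game is maximal if for every $\pi\in S_m\setminus\mathrm{Der}_m$ exactly half of the elements of $EC(\pi)$ are Nash equilibria.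 For $j\in\mathcal A$, $\delta^j\in S_m$ is the unique permutation with $\delta^j(j)=j$ such that for all $k_1<k_2$ in $\mathcal A\setminus\{j\}$ one has $\delta^j(k_1)>\delta^j(k_2)$ iff $k_1<j<k_2$. *)

theory Defs
  imports "HOL-Library.FuncSet" "HOL-Combinatorics.Permutations" Complex_Main
begin

text \<open>Pure profiles are extensional maps from {1..m} to {0,1}
 (0 means strategy s_0, 1 means s_1).\<close>

definition pure_profiles :: "nat \<Rightarrow> (nat \<Rightarrow> nat) set" where
  "pure_profiles m = PiE {1..m} (\<lambda>_. {0, 1})"

definition mixed_space :: "nat \<Rightarrow> (nat \<Rightarrow> real) set" where
  "mixed_space m = PiE {1..m} (\<lambda>_. {0..1})"

definition exp_util :: "nat \<Rightarrow> (nat \<Rightarrow> (nat \<Rightarrow> nat) \<Rightarrow> real) \<Rightarrow> nat \<Rightarrow> (nat \<Rightarrow> real) \<Rightarrow> real" where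
  "exp_util m U i \<gamma> =
     (\<Sum>s\<in>pure_profiles m. (\<Prod>k\<in>{1..m}. (if s k = 1 then \<gamma> k else 1 - \<gamma> k)) * U i s)"

definition lam :: "nat \<Rightarrow> (nat \<Rightarrow> (nat \<Rightarrow> nat) \<Rightarrow> real) \<Rightarrow> nat \<Rightarrow> (nat \<Rightarrow> real) \<Rightarrow> real" where
  "lam m U i \<gamma> = exp_util m U i (\<gamma>(i := 1)) - exp_util m U i (\<gamma>(i := 0))"

definition nash_eq :: "nat \<Rightarrow> (nat \<Rightarrow> (nat \<Rightarrow> nat) \<Rightarrow> real) \<Rightarrow> (nat \<Rightarrow> real) \<Rightarrow> bool" where
  "nash_eq m U \<gamma> \<longleftrightarrow> \<gamma> \<in> mixed_space m \<and>
     (\<forall>i\<in>{1..m}.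
        (0 < \<gamma> i \<and> \<gamma> i < 1 \<longrightarrow> lam m U i \<gamma> = 0) \<and>
        (\<gamma> i = 0 \<longrightarrow> lam m U i \<gamma> \<le> 0) \<and>
        (\<gamma> i = 1 \<longrightarrow> lam m U i \<gamma> \<ge> 0))"

definition Lset :: "nat \<Rightarrow> (nat \<Rightarrow> real) \<Rightarrow> nat set" where
  "Lset m \<gamma> = {i\<in>{1..m}. \<gamma> i = 0 \<or> \<gamma> i = 1}"

text \<open>Product two-action game with data v (v i \<in> {0,1}) and a (a i j = a^i_j).\<close>
definition product_game ::
  "nat \<Rightarrow> (nat \<Rightarrow> (nat \<Rightarrow> nat) \<Rightarrow> real) \<Rightarrow> (nat \<Rightarrow> nat) \<Rightarrow> (nat \<Rightarrow> nat \<Rightarrow> real) \<Rightarrow> bool" where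
  "product_game m U v a \<longleftrightarrow>
     (\<forall>i\<in>{1..m}. v i \<in> {0, 1}) \<and>
     (\<forall>i\<in>{1..m}. \<forall>j\<in>{1..m}. i \<noteq> j \<longrightarrow> 0 < a i j \<and> a i j < 1) \<and>
     (\<forall>j\<in>{1..m}. \<forall>i1\<in>{1..m}. \<forall>i2\<in>{1..m}.
        i1 \<noteq> i2 \<and> i1 \<noteq> j \<and> i2 \<noteq> j \<longrightarrow> a i1 j \<noteq> a i2 j) \<and>
     (\<forall>i\<in>{1..m}. \<forall>\<gamma>\<in>mixed_space m.
        lam m U i \<gamma> = (-1) ^ v i * (\<Prod>j\<in>{1..m} - {i}. \<gamma> j - a i j))"

definition assoc_perm :: "nat \<Rightarrow> (nat \<Rightarrow> nat \<Rightarrow> real) \<Rightarrow> nat \<Rightarrow> (nat \<Rightarrow> nat)" where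
  "assoc_perm m a j = (THE \<sigma>. \<sigma> permutes {1..m} \<and> \<sigma> j = j \<and>
     (\<forall>i\<in>{1..m} - {j}. \<forall>i'\<in>{1..m} - {j}. \<sigma> i < \<sigma> i' \<longleftrightarrow> a i j > a i' j))"

definition delta_perm :: "nat \<Rightarrow> nat \<Rightarrow> (nat \<Rightarrow> nat)" where
  "delta_perm m j = (THE \<delta>. \<delta> permutes {1..m} \<and> \<delta> j = j \<and>
     (\<forall>k1\<in>{1..m} - {j}. \<forall>k2\<in>{1..m} - {j}. k1 < k2 \<longrightarrow>
        (\<delta> k1 > \<delta> k2 \<longleftrightarrow> k1 < j \<and> j < k2)))"

definition fixpts :: "nat \<Rightarrow> (nat \<Rightarrow> nat) \<Rightarrow> nat set" where
  "fixpts m \<pi> = {i\<in>{1..m}. \<pi> i = i}"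

definition EC :: "nat \<Rightarrow> (nat \<Rightarrow> nat \<Rightarrow> real) \<Rightarrow> (nat \<Rightarrow> nat) \<Rightarrow> (nat \<Rightarrow> real) set" where
  "EC m a \<pi> = {\<gamma>\<in>mixed_space m. Lset m \<gamma> = fixpts m \<pi> \<and>
      (\<forall>j\<in>{1..m} - fixpts m \<pi>. \<gamma> j = a (\<pi> j) j)}"

definition maximal :: "nat \<Rightarrow> (nat \<Rightarrow> (nat \<Rightarrow> nat) \<Rightarrow> real) \<Rightarrow> (nat \<Rightarrow> nat \<Rightarrow> real) \<Rightarrow> bool" where
  "maximal m U a \<longleftrightarrow>
     (\<forall>\<pi>. \<pi> permutes {1..m} \<and> fixpts m \<pi> \<noteq> {} \<longrightarrow>
        2 * card {\<gamma>\<in>EC m a \<pi>. nash_eq m U \<gamma>} = card (EC m a \<pi>))"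

end

theory Submission
  imports Defs
begin

text \<open>Fix \<pi> with a fixed point. A player i moved by \<pi> is indifferent on EC(\<pi>), since the factor
  of the player \<pi>\<inverse>(i) in \<lambda>^i vanishes. For a fixed player i all factors of \<lambda>^i are nonzero;
  the negative ones belong to the fixed players playing s_0 and, because the a^i_j are ordered by
  \<delta>^j, i.e. by cyclic distance from j, to the moved players j whose cyclic arc from j to \<pi>(j)
  passes over i. Every point of the cycle is covered by the same number of arcs: stepping
  forward, a point leaves as many arcs (those ending there) as it enters (those starting there).
  So a point of EC(\<pi>) is an equilibrium iff the number of fixed players playing s_0 has a
  prescribed parity, and switching one fixed player's strategy exchanges equilibria and
  non-equilibria.\<close>

definition rank_in :: "'a set \<Rightarrow> ('a \<Rightarrow> 'b::linorder) \<Rightarrow> 'a \<Rightarrow> nat" where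
  "rank_in S g x = card {z\<in>S. g z < g x}"

lemma rank_in_strict_mono:
  assumes "finite S" "x \<in> S" "y \<in> S" "g x < g y"
  shows "rank_in S g x < rank_in S g y"
  unfolding rank_in_def using assms by (intro psubset_card_mono) auto

lemma rank_in_less_iff:
  assumes "finite S" "inj_on g S" "x \<in> S" "y \<in> S"
  shows "rank_in S g x < rank_in S g y \<longleftrightarrow> g x < g y"
  using rank_in_strict_mono[OF assms(1)] assms by (metis inj_onD less_asym' linorder_neqE)

lemma bij_betw_rank_in:
  assumes "finite S" "inj_on g S"
  shows "bij_betw (rank_in S g) S {..<card S}"
proof -
  have inj: "inj_on (rank_in S g) S"
    using rank_in_less_iff[OF assms] assms(2) by (metis inj_on_def linorder_neqE less_irrefl)
  have "rank_in S g ` S \<subseteq> {..<card S}"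
    unfolding rank_in_def using assms(1) by (auto intro!: psubset_card_mono)
  moreover have "card (rank_in S g ` S) = card {..<card S}"
    using card_image[OF inj] by simp
  ultimately show ?thesis
    using inj by (simp add: bij_betw_def card_subset_eq)
qed

text \<open>A permutation that fixes j and is order-isomorphic to g off j is determined by the ranks:
  it sends the element of g-rank r to the element of rank r.\<close>
lemma ex1_order_iso_permutation:
  fixes g :: "'a::linorder \<Rightarrow> 'b::linorder"
  assumes T: "finite T" and j: "j \<in> T" and inj: "inj_on g (T - {j})"
  shows "\<exists>!\<sigma>. \<sigma> permutes T \<and> \<sigma> j = j \<and> (\<forall>x\<in>T-{j}. \<forall>y\<in>T-{j}. \<sigma> x < \<sigma> y \<longleftrightarrow> g x < g y)"
    (is "\<exists>!\<sigma>. ?P \<sigma>")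
proof -
  define S where "S = T - {j}"
  have S: "finite S" "inj_on g S" "inj_on id S" using T inj by (auto simp: S_def)
  define \<sigma> where "\<sigma> x = (if x \<in> S then inv_into S (rank_in S id) (rank_in S g x) else x)" for x
  have bij_id: "bij_betw (rank_in S id) S {..<card S}" and bij_g: "bij_betw (rank_in S g) S {..<card S}"
    using bij_betw_rank_in S by blast+
  have "bij_betw (inv_into S (rank_in S id) \<circ> rank_in S g) S S"
    using bij_betw_trans[OF bij_g bij_betw_inv_into[OF bij_id]] .
  then have \<sigma>_bij: "bij_betw \<sigma> S S"
    by (rule bij_betw_cong[THEN iffD1, rotated]) (simp add: \<sigma>_def)
  have rank_\<sigma>: "rank_in S id (\<sigma> x) = rank_in S g x" if "x \<in> S" for x
    using that bij_id bij_g by (metis \<sigma>_def bij_betw_def bij_betwE f_inv_into_f)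
  have "\<sigma> permutes S"
    using \<sigma>_bij by (rule bij_imp_permutes) (simp add: \<sigma>_def)
  then have "\<sigma> permutes T"
    by (rule permutes_subset) (auto simp: S_def)
  moreover have "\<forall>x\<in>S. \<forall>y\<in>S. \<sigma> x < \<sigma> y \<longleftrightarrow> g x < g y"
    using rank_in_less_iff[OF S(1,3)] rank_in_less_iff[OF S(1,2)] rank_\<sigma> \<sigma>_bij
    by (metis bij_betwE id_apply)
  ultimately have \<sigma>_iso: "?P \<sigma>"
    by (simp add: \<sigma>_def S_def)
  show ?thesis
  proof (rule ex1I)
    show "?P \<sigma>" by (fact \<sigma>_iso)
  next
    fix \<tau> assume \<tau>: "?P \<tau>"
    then have \<tau>_inj: "inj \<tau>" using permutes_inj by blast
    have \<tau>_S: "\<tau> ` S = S"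
      using \<tau> by (simp add: S_def image_set_diff[OF \<tau>_inj] permutes_image)
    have "rank_in S id (\<tau> x) = rank_in S g x" if "x \<in> S" for x
    proof -
      have "{z\<in>S. z < \<tau> x} = \<tau> ` {y\<in>S. \<tau> y < \<tau> x}" using \<tau>_S by auto
      also have "{y\<in>S. \<tau> y < \<tau> x} = {y\<in>S. g y < g x}" using \<tau> that by (auto simp: S_def)
      finally show ?thesis
        using \<tau>_inj by (simp add: rank_in_def card_image inj_on_subset)
    qed
    then have "\<tau> x = \<sigma> x" if "x \<in> S" for x
      using that rank_\<sigma> bij_id \<tau>_S \<sigma>_bij by (metis bij_betw_def bij_betwE imageI inj_onD)
    moreover have "\<tau> x = \<sigma> x" if "x \<notin> S" for x
      using that \<tau> permutes_not_in by (fastforce simp: \<sigma>_def S_def)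
    ultimately show "\<tau> = \<sigma>" by blast
  qed
qed

lemma less_iff_of_ordered_pairs:
  fixes f :: "'a::linorder \<Rightarrow> 'b::linorder" and g :: "'a \<Rightarrow> 'c::linorder"
  assumes "inj_on f S" "inj_on g S"
    and ordered: "\<And>x y. x \<in> S \<Longrightarrow> y \<in> S \<Longrightarrow> x < y \<Longrightarrow> f y < f x \<longleftrightarrow> g y < g x"
    and "x \<in> S" "y \<in> S"
  shows "f x < f y \<longleftrightarrow> g x < g y"
proof -
  consider "x < y" | "x = y" | "y < x"
    by (meson linorder_neqE)
  then show ?thesis
  proof cases
    case 1
    have "f x \<noteq> f y" "g x \<noteq> g y"
      using 1 assms by (auto dest: inj_onD)
    then show ?thesis
      using ordered[OF \<open>x \<in> S\<close> \<open>y \<in> S\<close> 1] by (meson linorder_neqE not_less_iff_gr_or_eq)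
  qed (use ordered \<open>x \<in> S\<close> \<open>y \<in> S\<close> in auto)
qed

definition cyc_dist :: "nat \<Rightarrow> nat \<Rightarrow> nat \<Rightarrow> int" where
  "cyc_dist m j x = (int x - int j) mod int m"

lemma cyc_dist_eq:
  assumes "x \<in> {1..m}" "j \<in> {1..m}"
  shows "cyc_dist m j x = (if j \<le> x then int x - int j else int x - int j + int m)"
proof (cases "j \<le> x")
  case False
  have "(int x - int j + int m) mod int m = int x - int j + int m"
    using assms False by (intro mod_pos_pos_trivial) auto
  then show ?thesis using False by (simp add: cyc_dist_def)
qed (use assms in \<open>simp add: cyc_dist_def mod_pos_pos_trivial\<close>)

lemma inj_on_cyc_dist: "j \<in> {1..m} \<Longrightarrow> inj_on (cyc_dist m j) {1..m}"
  by (rule inj_onI) (auto simp: cyc_dist_eq split: if_splits)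

lemma cyc_dist_less_iff:
  assumes "j \<in> {1..m}" "k1 \<in> {1..m} - {j}" "k2 \<in> {1..m} - {j}" "k1 < k2"
  shows "cyc_dist m j k2 < cyc_dist m j k1 \<longleftrightarrow> k1 < j \<and> j < k2"
  using assms by (auto simp: cyc_dist_eq)

text \<open>\<delta>^j lists the other players in the cyclic order j+1, \<dots>, m, 1, \<dots>, j-1.\<close>
lemma delta_perm_less_iff:
  assumes j: "j \<in> {1..m}" and "x \<in> {1..m} - {j}" "y \<in> {1..m} - {j}"
  shows "delta_perm m j x < delta_perm m j y \<longleftrightarrow> cyc_dist m j x < cyc_dist m j y"
proof -
  let ?S = "{1..m} - {j}"
  let ?P = "\<lambda>\<delta>. \<delta> permutes {1..m} \<and> \<delta> j = j \<and>
     (\<forall>k1\<in>?S. \<forall>k2\<in>?S. k1 < k2 \<longrightarrow> (\<delta> k1 > \<delta> k2 \<longleftrightarrow> k1 < j \<and> j < k2))"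
  let ?iso = "\<lambda>\<delta>. \<delta> permutes {1..m} \<and> \<delta> j = j \<and>
    (\<forall>x\<in>?S. \<forall>y\<in>?S. \<delta> x < \<delta> y \<longleftrightarrow> cyc_dist m j x < cyc_dist m j y)"
  have inj: "inj_on (cyc_dist m j) ?S"
    using inj_on_cyc_dist[OF j] by (rule inj_on_subset) blast
  have P_iff_iso: "?P \<delta> \<longleftrightarrow> ?iso \<delta>" for \<delta>
  proof
    assume P: "?P \<delta>"
    then have "inj_on \<delta> ?S"
      by (meson inj_on_subset permutes_inj subset_UNIV)
    then show "?iso \<delta>"
      using P less_iff_of_ordered_pairs[OF _ inj] cyc_dist_less_iff[OF j] by (smt (verit))
  qed (use cyc_dist_less_iff[OF j] in blast)
  have "\<exists>!\<delta>. ?iso \<delta>"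
    using ex1_order_iso_permutation[OF _ j inj] by simp
  then have "?P (delta_perm m j)"
    unfolding delta_perm_def P_iff_iso by (rule theI')
  then show ?thesis using assms P_iff_iso by blast
qed

lemma assoc_perm_less_iff:
  assumes j: "j \<in> {1..m}" and x: "x \<in> {1..m} - {j}" and y: "y \<in> {1..m} - {j}"
    and distinct: "\<forall>i1\<in>{1..m}. \<forall>i2\<in>{1..m}. i1 \<noteq> i2 \<and> i1 \<noteq> j \<and> i2 \<noteq> j \<longrightarrow> a i1 j \<noteq> a i2 j"
  shows "assoc_perm m a j x < assoc_perm m a j y \<longleftrightarrow> a y j < a x j"
proof -
  have "inj_on (\<lambda>i. - a i j) ({1..m} - {j})"
    by (rule inj_onI) (use distinct in fastforce)
  then have "\<exists>!\<sigma>. \<sigma> permutes {1..m} \<and> \<sigma> j = j \<and>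
     (\<forall>i\<in>{1..m} - {j}. \<forall>i'\<in>{1..m} - {j}. \<sigma> i < \<sigma> i' \<longleftrightarrow> a i j > a i' j)"
    using ex1_order_iso_permutation[OF _ j, of "\<lambda>i. - a i j"] by simp
  then have "\<forall>i\<in>{1..m} - {j}. \<forall>i'\<in>{1..m} - {j}.
      assoc_perm m a j i < assoc_perm m a j i' \<longleftrightarrow> a i j > a i' j"
    unfolding assoc_perm_def by (rule theI'[THEN conjunct2, THEN conjunct2])
  then show ?thesis
    using x y by blast
qed

text \<open>Stepping from t to t + 1 leaves the arc [k, l) iff t + 1 = l and enters it iff t + 1 = k.\<close>
lemma arc_indicator_step:
  fixes k l t m :: int
  assumes "0 < m"
  shows "of_bool ((t + 1 - k) mod m < (l - k) mod m) + of_bool ((t + 1) mod m = l mod m)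
       = of_bool ((t - k) mod m < (l - k) mod m) + (of_bool ((t + 1) mod m = k mod m) :: nat)"
proof -
  define r where "r = (t - k) mod m"
  define D where "D = (l - k) mod m"
  have r: "0 \<le> r" "r < m" and D: "0 \<le> D" "D < m"
    using assms by (simp_all add: r_def D_def)
  have succ: "(t + 1 - k) mod m = (r + 1) mod m"
    unfolding r_def mod_add_left_eq by (simp add: algebra_simps)
  have hit_l: "(t + 1) mod m = l mod m \<longleftrightarrow> (t + 1 - k) mod m = D"
    unfolding D_def by (simp add: mod_eq_dvd_iff algebra_simps)
  have hit_k: "(t + 1) mod m = k mod m \<longleftrightarrow> (t + 1 - k) mod m = 0"
    by (simp add: mod_eq_dvd_iff mod_eq_0_iff_dvd)
  show ?thesis
  proof (cases "r + 1 < m")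
    case True
    then have "(r + 1) mod m = r + 1" using r by simp
    then show ?thesis using succ hit_l hit_k r D unfolding r_def[symmetric] D_def[symmetric] by auto
  next
    case False
    then have "r + 1 = m" using r by simp
    moreover from this have "(r + 1) mod m = 0" by simp
    ultimately show ?thesis using succ hit_l hit_k r D unfolding r_def[symmetric] D_def[symmetric] by auto
  qed
qed

text \<open>(t - k) mod m < cyc_dist m k (\<pi> k) says that t lies on the half-open cyclic arc from k
  to \<pi> k; arc_count counts the arcs over t.\<close>
definition arc_count :: "nat \<Rightarrow> (nat \<Rightarrow> nat) \<Rightarrow> int \<Rightarrow> nat" where
  "arc_count m \<pi> t = card {k\<in>{1..m}. (t - int k) mod int m < cyc_dist m k (\<pi> k)}"

lemma not_on_arc_of_fixed_point: "0 < m \<Longrightarrow> \<not> (t - int k) mod int m < cyc_dist m k k"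
  by (simp add: cyc_dist_def not_less)

lemma card_eq_sum_of_bool: "finite A \<Longrightarrow> card {x\<in>A. P x} = (\<Sum>x\<in>A. of_bool (P x))"
  by (simp add: Collect_conj_eq Int_commute)

lemma arc_count_succ:
  assumes \<pi>: "\<pi> permutes {1..m}"
  shows "arc_count m \<pi> (t + 1) = arc_count m \<pi> t"
proof (cases "m = 0")
  case False
  let ?in_arc = "\<lambda>t k. (t - int k) mod int m < cyc_dist m k (\<pi> k)"
  let ?hit = "\<lambda>k. of_bool ((t + 1) mod int m = int k mod int m) :: nat"
  have "(\<Sum>k\<in>{1..m}. ?hit (\<pi> k)) = (\<Sum>k\<in>{1..m}. ?hit k)"
    using sum.permute[OF \<pi>, of ?hit] by simp
  moreover have "(\<Sum>k\<in>{1..m}. of_bool (?in_arc (t + 1) k) + ?hit (\<pi> k))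
      = (\<Sum>k\<in>{1..m}. of_bool (?in_arc t k) + ?hit k)"
    using arc_indicator_step[of "int m"] False by (intro sum.cong) (simp_all add: cyc_dist_def)
  ultimately have "(\<Sum>k\<in>{1..m}. (of_bool (?in_arc (t + 1) k) :: nat))
      = (\<Sum>k\<in>{1..m}. of_bool (?in_arc t k))"
    by (simp add: sum.distrib)
  then show ?thesis
    by (simp only: arc_count_def card_eq_sum_of_bool[OF finite_atLeastAtMost])
qed (simp add: arc_count_def)

lemma arc_count_const:
  assumes "\<pi> permutes {1..m}"
  shows "arc_count m \<pi> t = arc_count m \<pi> 0"
  by (induction t rule: int_induct[of _ 0])
    (use arc_count_succ[OF assms] in \<open>metis diff_add_cancel\<close>)+

lemma prod_pos_iff_even_card_neg:
  fixes f :: "'a \<Rightarrow> real"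
  assumes "finite K" "\<forall>k\<in>K. f k \<noteq> 0"
  shows "0 < (\<Prod>k\<in>K. f k) \<longleftrightarrow> even (card {k\<in>K. f k < 0})"
  using assms
proof (induction K rule: finite_induct)
  case (insert x K)
  have "(\<Prod>k\<in>K. f k) \<noteq> 0"
    using insert by simp
  then have sign: "(\<Prod>k\<in>K. f k) < 0 \<or> 0 < (\<Prod>k\<in>K. f k)"
    by linarith
  have "{k\<in>insert x K. f k < 0} = (if f x < 0 then insert x {k\<in>K. f k < 0} else {k\<in>K. f k < 0})"
    by auto
  then show ?case
    using insert sign by (cases "f x < 0") (auto simp: zero_less_mult_iff linorder_neq_iff)
qed simp

lemma card_half_by_involution:
  assumes "finite E" "\<And>x. x \<in> E \<Longrightarrow> \<phi> x \<in> E" "\<And>x. x \<in> E \<Longrightarrow> \<phi> (\<phi> x) = x"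
    and "\<And>x. x \<in> E \<Longrightarrow> P (\<phi> x) \<longleftrightarrow> \<not> P x"
  shows "2 * card {x\<in>E. P x} = card E"
proof -
  let ?A = "{x\<in>E. P x}"
  have "\<phi> ` ?A = E - ?A"
    using assms(2-4) by auto (metis (mono_tags, lifting) image_eqI mem_Collect_eq)
  moreover have "inj_on \<phi> ?A"
    using assms(3) by (metis (mono_tags, lifting) inj_onI mem_Collect_eq)
  ultimately have "card (E - ?A) = card ?A"
    by (metis card_image)
  moreover have "card (E - ?A) = card E - card ?A" "card ?A \<le> card E"
    using assms(1) by (auto intro: card_Diff_subset card_mono)
  ultimately show ?thesis by linarith
qed

lemma card_filter_remove:
  assumes "finite F" "i \<in> F"
  shows "card {j\<in>F. P j} = card {j\<in>F - {i}. P j} + of_bool (P i)"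
proof -
  have "{j\<in>F. P j} = {j\<in>F - {i}. P j} \<union> (if P i then {i} else {})"
    using assms(2) by auto
  then show ?thesis
    using assms(1) by (simp add: card_Un_disjoint)
qed

definition plays_best_response ::
    "nat \<Rightarrow> (nat \<Rightarrow> (nat \<Rightarrow> nat) \<Rightarrow> real) \<Rightarrow> (nat \<Rightarrow> real) \<Rightarrow> nat \<Rightarrow> bool" where
  "plays_best_response m U \<gamma> i \<longleftrightarrow>
     (0 < \<gamma> i \<and> \<gamma> i < 1 \<longrightarrow> lam m U i \<gamma> = 0) \<and>
     (\<gamma> i = 0 \<longrightarrow> lam m U i \<gamma> \<le> 0) \<and> (\<gamma> i = 1 \<longrightarrow> lam m U i \<gamma> \<ge> 0)"

lemma nash_eq_iff_best_responses:
  "nash_eq m U \<gamma> \<longleftrightarrow> \<gamma> \<in> mixed_space m \<and> (\<forall>i\<in>{1..m}. plays_best_response m U \<gamma> i)"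
  by (simp add: nash_eq_def plays_best_response_def)

locale cyclic_product_game =
  fixes m :: nat and U :: "nat \<Rightarrow> (nat \<Rightarrow> nat) \<Rightarrow> real" and a :: "nat \<Rightarrow> nat \<Rightarrow> real"
  assumes a_in_unit: "\<lbrakk>i \<in> {1..m}; j \<in> {1..m}; i \<noteq> j\<rbrakk> \<Longrightarrow> 0 < a i j \<and> a i j < 1"
    and lam_eq: "\<lbrakk>i \<in> {1..m}; \<gamma> \<in> mixed_space m\<rbrakk> \<Longrightarrow>
      lam m U i \<gamma> = (\<Prod>j\<in>{1..m} - {i}. \<gamma> j - a i j)"
    and a_less_iff: "\<lbrakk>j \<in> {1..m}; x \<in> {1..m} - {j}; y \<in> {1..m} - {j}\<rbrakk> \<Longrightarrow>
      a y j < a x j \<longleftrightarrow> cyc_dist m j x < cyc_dist m j y"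
begin

lemma a_neq:
  assumes "j \<in> {1..m}" "x \<in> {1..m} - {j}" "y \<in> {1..m} - {j}" "x \<noteq> y"
  shows "a x j \<noteq> a y j"
proof
  assume "a x j = a y j"
  then have "cyc_dist m j x = cyc_dist m j y"
    using a_less_iff[OF assms(1-3)] a_less_iff[OF assms(1,3,2)] by auto
  then show False
    using inj_on_cyc_dist[OF assms(1)] assms by (auto dest: inj_onD)
qed

context
  fixes \<pi> :: "nat \<Rightarrow> nat"
  assumes \<pi>: "\<pi> permutes {1..m}"
begin

lemma EC_fixed: "\<gamma> \<in> EC m a \<pi> \<Longrightarrow> i \<in> fixpts m \<pi> \<Longrightarrow> \<gamma> i = 0 \<or> \<gamma> i = 1"
  by (auto simp: EC_def Lset_def)

lemma EC_moved: "\<gamma> \<in> EC m a \<pi> \<Longrightarrow> j \<in> {1..m} \<Longrightarrow> \<pi> j \<noteq> j \<Longrightarrow> \<gamma> j = a (\<pi> j) j"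
  by (auto simp: EC_def fixpts_def)

lemma finite_EC: "finite (EC m a \<pi>)"
proof (rule finite_subset)
  show "EC m a \<pi> \<subseteq> PiE {1..m} (\<lambda>j. {0, 1, a (\<pi> j) j})"
  proof
    fix \<gamma> assume \<gamma>: "\<gamma> \<in> EC m a \<pi>"
    have "\<gamma> j \<in> {0, 1, a (\<pi> j) j}" if "j \<in> {1..m}" for j
      using EC_fixed[OF \<gamma>, of j] EC_moved[OF \<gamma> that] that
      by (cases "\<pi> j = j") (auto simp: fixpts_def)
    moreover have "\<gamma> \<in> extensional {1..m}"
      using \<gamma> by (simp add: EC_def mixed_space_def PiE_def)
    ultimately show "\<gamma> \<in> PiE {1..m} (\<lambda>j. {0, 1, a (\<pi> j) j})"
      by (simp add: PiE_iff)
  qed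
qed (simp add: finite_PiE)

text \<open>A moved player i is indifferent: the factor of the player j = \<pi>\<inverse> i vanishes.\<close>
lemma lam_moved:
  assumes \<gamma>: "\<gamma> \<in> EC m a \<pi>" and i: "i \<in> {1..m}" "\<pi> i \<noteq> i"
  shows "lam m U i \<gamma> = 0"
proof -
  define k where "k = inv \<pi> i"
  have k: "\<pi> k = i" "k \<in> {1..m}"
    using permutes_inverses(1)[OF \<pi>] permutes_in_image[OF permutes_inv[OF \<pi>]] i(1)
    unfolding k_def by blast+
  then have "\<gamma> k - a i k = 0"
    using EC_moved[OF \<gamma>] i by fastforce
  then have "(\<Prod>j\<in>{1..m} - {i}. \<gamma> j - a i j) = 0"
    using k i by (intro prod_zero) auto
  then show ?thesis
    using lam_eq i \<gamma> by (simp add: EC_def)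
qed

lemma factor_at_fixed:
  assumes \<gamma>: "\<gamma> \<in> EC m a \<pi>" and i: "i \<in> fixpts m \<pi>" and j: "j \<in> {1..m} - {i}"
  shows "\<gamma> j - a i j \<noteq> 0"
    and "\<gamma> j - a i j < 0 \<longleftrightarrow>
      (j \<in> fixpts m \<pi> \<and> \<gamma> j = 0) \<or> (int i - int j) mod int m < cyc_dist m j (\<pi> j)"
proof -
  have im: "i \<in> {1..m}" "\<pi> i = i" using i by (auto simp: fixpts_def)
  have a_ij: "0 < a i j \<and> a i j < 1" using a_in_unit im j by auto
  have "(\<gamma> j - a i j \<noteq> 0) \<and> (\<gamma> j - a i j < 0 \<longleftrightarrow>
      (j \<in> fixpts m \<pi> \<and> \<gamma> j = 0) \<or> (int i - int j) mod int m < cyc_dist m j (\<pi> j))"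
  proof (cases "\<pi> j = j")
    case True
    have "\<not> (int i - int j) mod int m < cyc_dist m j (\<pi> j)"
      using not_on_arc_of_fixed_point im True by auto
    moreover have "\<gamma> j = 0 \<or> \<gamma> j = 1"
      using EC_fixed[OF \<gamma>] j True by (simp add: fixpts_def)
    ultimately show ?thesis
      using a_ij True j by (auto simp: fixpts_def)
  next
    case False
    have \<pi>j: "\<pi> j \<in> {1..m} - {j}" "\<pi> j \<noteq> i"
      using False j im permutes_in_image[OF \<pi>] permutes_inj[OF \<pi>] by (auto dest: injD)
    have "a (\<pi> j) j \<noteq> a i j"
      using a_neq \<pi>j im j by auto
    moreover have "a (\<pi> j) j < a i j \<longleftrightarrow> cyc_dist m j i < cyc_dist m j (\<pi> j)"
      using a_less_iff \<pi>j im j by auto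
    ultimately show ?thesis
      using EC_moved[OF \<gamma>] j False by (simp add: cyc_dist_def fixpts_def)
  qed
  then show "\<gamma> j - a i j \<noteq> 0"
    and "\<gamma> j - a i j < 0 \<longleftrightarrow>
      (j \<in> fixpts m \<pi> \<and> \<gamma> j = 0) \<or> (int i - int j) mod int m < cyc_dist m j (\<pi> j)"
    by blast+
qed

lemma lam_fixed_sign:
  assumes \<gamma>: "\<gamma> \<in> EC m a \<pi>" and i: "i \<in> fixpts m \<pi>"
  shows "lam m U i \<gamma> \<noteq> 0"
    and "0 < lam m U i \<gamma> \<longleftrightarrow>
      even (card {j\<in>fixpts m \<pi> - {i}. \<gamma> j = 0} + arc_count m \<pi> (int i))"
proof -
  let ?F = "fixpts m \<pi>"
  let ?arcs = "{j\<in>{1..m}. (int i - int j) mod int m < cyc_dist m j (\<pi> j)}"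
  have im: "i \<in> {1..m}" "\<pi> i = i" using i by (auto simp: fixpts_def)
  have lam: "lam m U i \<gamma> = (\<Prod>j\<in>{1..m} - {i}. \<gamma> j - a i j)"
    using lam_eq im \<gamma> by (simp add: EC_def)
  have arcs_moved: "\<pi> j \<noteq> j" if "j \<in> ?arcs" for j
    using that not_on_arc_of_fixed_point[of m "int i" j] im by auto
  have "{j\<in>{1..m} - {i}. \<gamma> j - a i j < 0} = {j\<in>?F - {i}. \<gamma> j = 0} \<union> ?arcs"
    using factor_at_fixed(2)[OF \<gamma> i] arcs_moved im by (auto simp: fixpts_def)
  moreover have "{j\<in>?F - {i}. \<gamma> j = 0} \<inter> ?arcs = {}"
    using arcs_moved by (auto simp: fixpts_def)
  ultimately have card_neg: "card {j\<in>{1..m} - {i}. \<gamma> j - a i j < 0}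
      = card {j\<in>?F - {i}. \<gamma> j = 0} + arc_count m \<pi> (int i)"
    by (simp add: card_Un_disjoint fixpts_def arc_count_def)
  have "0 < (\<Prod>j\<in>{1..m} - {i}. \<gamma> j - a i j) \<longleftrightarrow>
      even (card {j\<in>{1..m} - {i}. \<gamma> j - a i j < 0})"
    using factor_at_fixed(1)[OF \<gamma> i] by (intro prod_pos_iff_even_card_neg) auto
  then show "0 < lam m U i \<gamma> \<longleftrightarrow> even (card {j\<in>?F - {i}. \<gamma> j = 0} + arc_count m \<pi> (int i))"
    unfolding lam card_neg .
  show "lam m U i \<gamma> \<noteq> 0"
    unfolding lam using factor_at_fixed(1)[OF \<gamma> i] by simp
qed

lemma best_response_moved:
  "\<gamma> \<in> EC m a \<pi> \<Longrightarrow> i \<in> {1..m} \<Longrightarrow> \<pi> i \<noteq> i \<Longrightarrow> plays_best_response m U \<gamma> i"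
  using lam_moved by (simp add: plays_best_response_def)

lemma best_response_fixed_iff:
  assumes \<gamma>: "\<gamma> \<in> EC m a \<pi>" and i: "i \<in> fixpts m \<pi>"
  shows "plays_best_response m U \<gamma> i \<longleftrightarrow>
    even (card {j\<in>fixpts m \<pi>. \<gamma> j = 0} + arc_count m \<pi> 0)"
proof -
  have "card {j\<in>fixpts m \<pi>. \<gamma> j = 0} = card {j\<in>fixpts m \<pi> - {i}. \<gamma> j = 0} + of_bool (\<gamma> i = 0)"
    using i by (intro card_filter_remove) (auto simp: fixpts_def)
  moreover have "arc_count m \<pi> (int i) = arc_count m \<pi> 0"
    by (rule arc_count_const[OF \<pi>])
  ultimately show ?thesis
    using lam_fixed_sign[OF \<gamma> i] EC_fixed[OF \<gamma> i]
    by (auto simp: plays_best_response_def)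
qed

lemma nash_eq_iff_even:
  assumes "fixpts m \<pi> \<noteq> {}" and \<gamma>: "\<gamma> \<in> EC m a \<pi>"
  shows "nash_eq m U \<gamma> \<longleftrightarrow> even (card {j\<in>fixpts m \<pi>. \<gamma> j = 0} + arc_count m \<pi> 0)"
proof -
  obtain i0 where i0: "i0 \<in> fixpts m \<pi>" using assms(1) by blast
  have "(\<forall>i\<in>{1..m}. plays_best_response m U \<gamma> i) \<longleftrightarrow>
      even (card {j\<in>fixpts m \<pi>. \<gamma> j = 0} + arc_count m \<pi> 0)"
  proof
    assume "\<forall>i\<in>{1..m}. plays_best_response m U \<gamma> i"
    then show "even (card {j\<in>fixpts m \<pi>. \<gamma> j = 0} + arc_count m \<pi> 0)"
      using best_response_fixed_iff[OF \<gamma> i0] i0 by (simp add: fixpts_def)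
  next
    assume "even (card {j\<in>fixpts m \<pi>. \<gamma> j = 0} + arc_count m \<pi> 0)"
    then show "\<forall>i\<in>{1..m}. plays_best_response m U \<gamma> i"
      using best_response_moved[OF \<gamma>] best_response_fixed_iff[OF \<gamma>]
      by (metis (mono_tags, lifting) fixpts_def mem_Collect_eq)
  qed
  moreover have "\<gamma> \<in> mixed_space m"
    using \<gamma> by (simp add: EC_def)
  ultimately show ?thesis
    by (simp add: nash_eq_iff_best_responses)
qed

lemma EC_flip:
  assumes i: "i \<in> fixpts m \<pi>" and \<gamma>: "\<gamma> \<in> EC m a \<pi>"
  shows "\<gamma>(i := 1 - \<gamma> i) \<in> EC m a \<pi>"
proof -
  have \<gamma>i: "\<gamma> i = 0 \<or> \<gamma> i = 1" and im: "i \<in> {1..m}"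
    using EC_fixed[OF \<gamma> i] i by (auto simp: fixpts_def)
  have "\<gamma>(i := 1 - \<gamma> i) \<in> PiE (insert i {1..m}) (\<lambda>_. {0..1})"
    using \<gamma> \<gamma>i by (intro PiE_fun_upd) (auto simp: EC_def mixed_space_def)
  then have "\<gamma>(i := 1 - \<gamma> i) \<in> mixed_space m"
    using im by (simp add: mixed_space_def insert_absorb)
  moreover have "Lset m (\<gamma>(i := 1 - \<gamma> i)) = Lset m \<gamma>"
    using \<gamma>i by (auto simp: Lset_def)
  ultimately show ?thesis
    using \<gamma> i by (auto simp: EC_def fixpts_def)
qed

lemma card_zeros_flip:
  assumes i: "i \<in> fixpts m \<pi>" and \<gamma>: "\<gamma> \<in> EC m a \<pi>"
  shows "card {j\<in>fixpts m \<pi>. (\<gamma>(i := 1 - \<gamma> i)) j = 0} + card {j\<in>fixpts m \<pi>. \<gamma> j = 0}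
    = 2 * card {j\<in>fixpts m \<pi> - {i}. \<gamma> j = 0} + 1"
proof -
  have fin: "finite (fixpts m \<pi>)" by (simp add: fixpts_def)
  have "{j\<in>fixpts m \<pi> - {i}. (\<gamma>(i := 1 - \<gamma> i)) j = 0} = {j\<in>fixpts m \<pi> - {i}. \<gamma> j = 0}"
    by auto
  moreover have "of_bool ((\<gamma>(i := 1 - \<gamma> i)) i = 0) + of_bool (\<gamma> i = 0) = (1::nat)"
    using EC_fixed[OF \<gamma> i] by auto
  ultimately show ?thesis
    using card_filter_remove[OF fin i, of "\<lambda>j. (\<gamma>(i := 1 - \<gamma> i)) j = 0"]
      card_filter_remove[OF fin i, of "\<lambda>j. \<gamma> j = 0"]
    by simp
qed

lemma card_nash_EC:
  assumes "fixpts m \<pi> \<noteq> {}"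
  shows "2 * card {\<gamma>\<in>EC m a \<pi>. nash_eq m U \<gamma>} = card (EC m a \<pi>)"
proof -
  obtain i where i: "i \<in> fixpts m \<pi>" using assms by blast
  show ?thesis
  proof (rule card_half_by_involution[OF finite_EC])
    fix \<gamma> assume \<gamma>: "\<gamma> \<in> EC m a \<pi>"
    show "\<gamma>(i := 1 - \<gamma> i) \<in> EC m a \<pi>" by (rule EC_flip[OF i \<gamma>])
    show "(\<gamma>(i := 1 - \<gamma> i))(i := 1 - (\<gamma>(i := 1 - \<gamma> i)) i) = \<gamma>" by simp
    have "odd (card {j\<in>fixpts m \<pi>. (\<gamma>(i := 1 - \<gamma> i)) j = 0} + card {j\<in>fixpts m \<pi>. \<gamma> j = 0})"
      unfolding card_zeros_flip[OF i \<gamma>] by simp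
    then show "nash_eq m U (\<gamma>(i := 1 - \<gamma> i)) \<longleftrightarrow> \<not> nash_eq m U \<gamma>"
      using nash_eq_iff_even[OF assms] EC_flip[OF i \<gamma>] \<gamma> by auto
  qed
qed

end

lemma maximal: "maximal m U a"
  unfolding maximal_def using card_nash_EC by blast

end

theorem theorem4p4:
  fixes m :: nat and U :: "nat \<Rightarrow> (nat \<Rightarrow> nat) \<Rightarrow> real"
    and v :: "nat \<Rightarrow> nat" and a :: "nat \<Rightarrow> nat \<Rightarrow> real"
  assumes "m \<ge> 1"
    and "product_game m U v a"
    and "\<forall>i\<in>{1..m}. v i = 0"
    and "\<forall>j\<in>{1..m}. assoc_perm m a j = delta_perm m j"
  shows "maximal m U a"
proof -
  have a_in_unit: "\<forall>i\<in>{1..m}. \<forall>j\<in>{1..m}. i \<noteq> j \<longrightarrow> 0 < a i j \<and> a i j < 1"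
    and distinct: "\<forall>j\<in>{1..m}. \<forall>i1\<in>{1..m}. \<forall>i2\<in>{1..m}.
        i1 \<noteq> i2 \<and> i1 \<noteq> j \<and> i2 \<noteq> j \<longrightarrow> a i1 j \<noteq> a i2 j"
    and lam: "\<forall>i\<in>{1..m}. \<forall>\<gamma>\<in>mixed_space m.
        lam m U i \<gamma> = (-1) ^ v i * (\<Prod>j\<in>{1..m} - {i}. \<gamma> j - a i j)"
    using assms(2) unfolding product_game_def by blast+
  interpret cyclic_product_game m U a
  proof
    fix j x y assume j: "j \<in> {1..m}" and xy: "x \<in> {1..m} - {j}" "y \<in> {1..m} - {j}"
    have "a y j < a x j \<longleftrightarrow> assoc_perm m a j x < assoc_perm m a j y"
      using assoc_perm_less_iff[OF j xy] distinct j by blast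
    also have "\<dots> \<longleftrightarrow> cyc_dist m j x < cyc_dist m j y"
      using delta_perm_less_iff[OF j xy] assms(4) j by simp
    finally show "a y j < a x j \<longleftrightarrow> cyc_dist m j x < cyc_dist m j y" .
  qed (use a_in_unit lam assms(3) in auto)
  show ?thesis by (rule maximal)
qed

end
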